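(* Let $p\in[1,\infty]$, let $Y$ be a complex Banach space, let $(\mathcal G,+)$ be a countable discrete group and $\mathbf X=\ell^p(\mathcal G,Y)$, with $\mathcal P$ and $\mathcal L(\mathbf X,\mathcal P)$ as in the context. Let $(\Omega,\mathcal G,\alpha)$ be a dynamical system and $A:\Omega\to\mathcal L(\mathbf X,\mathcal P)$ a family of operators over it. Then $\sigma^{\mathrm{op}}(A(\omega))=\{A(\nu):\nu\in\Omega\}$ for all pseudoergodic $\omega\in\Omega$. In particular, $A(\omega)$ is self-similar for each pseudoergodic $\omega\in\Omega$.
   Context: $(\mathcal G,+)$ is written additively but need not be abelian. Choose subsets $\mathcal G_n\subseteq\mathcal G$ with $\emptyset\neq\mathcal G_n\neq\mathcal G$, such that for each $m$ there is $N_m$ with $\mathcal G_m\subseteq\mathcal G_n$ for $n\ge N_m$, and $\bigcup_n\mathcal G_n=\mathcal G$; $P_n$ is multiplication by $\mathbf 1_{\mathcal G_n}$, $\mathcal P=(P_n)$. $K\in\mathcal L(\mathbf X)$ is $\mathcal P$-compact if $\|K(I-P_n)\|\to0$ and $\|(I-P_n)K\|\to0$; $\mathcal K(\mathbf X,\mathcal P)$ is the set of these and $\mathcal L(\mathbf X,\mathcal P)=\{A\in\mathcal L(\mathbf X):AK,KA\in\mathcal K(\mathbf X,\mathcal P)\ \forall K\in\mathcal K(\mathbf X,\mathcal P)\}$. $(A_n)$ converges $\mathcal P$-strongly to $A$ ($\mathcal P\text{-}\lim A_n=A$) if $\|K(A_n-A)\|+\|(A_n-A)K\|\to0$ for all $K\in\mathcal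 K(\mathbf X,\mathcal P)$. $V_gx=(x_{h+g})_{h\in\mathcal G}$. $g_n\to\infty$ means $(g_n)$ eventually leaves every finite subset. For $B\in\mathcal L(\mathbf X,\mathcal P)$ and $g=(g_n)$ with $g_n\to\infty$, the limit operator is $B_g:=\mathcal P\text{-}\lim V_{g_n}BV_{-g_n}$ if it exists; $\sigma^{\mathrm{op}}(B)$ is the set of all limit operators of $B$; $B$ is self-similar if $B\in\sigma^{\mathrm{op}}(B)$. A dynamical system $(\Omega,\mathcal G,\alpha)$: $\Omega$ compact metric space, $\alpha$ maps $\mathcal G$ to homeomorphisms of $\Omega$ with $\alpha(g+h)=\alpha(g)\circ\alpha(h)$. $L(\omega)=\{\nu:\exists g_n\to\infty,\ \alpha(g_n)(\omega)\to\nu\}$; $\omega$ is pseudoergodic if $L(\omega)=\Omega$. A family of operators over $(\Omega,\mathcal G,\alpha)$ is $A:\Omega\to\mathcal L(\mathbf X,\mathcal P)$ with $A(\alpha(g)(\omega))=V_gA(\omega)V_{-g}$ for all $\omega,g$, and such that $\omega_n\to\omega$ implies $\mathcal P\text{-}\lim A(\omega_n)=A(\omega)$. *)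

theory Defs
  imports "HOL-Analysis.Analysis"
begin

text \<open>The distribution has no class of complex normed vector spaces, so we
introduce one: a real Banach space with a compatible complex scalar multiplication.\<close>

class complex_banach = banach +
  fixes scaleC :: "complex \<Rightarrow> 'a \<Rightarrow> 'a"
  assumes scaleC_of_real: "scaleC (complex_of_real r) x = scaleR r x"
    and scaleC_add_right: "scaleC a (x + y) = scaleC a x + scaleC a y"
    and scaleC_add_left: "scaleC (a + b) x = scaleC a x + scaleC b x"
    and scaleC_scaleC: "scaleC a (scaleC b x) = scaleC (a * b) x"
    and scaleC_one: "scaleC 1 x = x"
    and norm_scaleC: "norm (scaleC a x) = cmod a * norm x"

text \<open>Elements of X = l^p(G,Y) are functions G \<Rightarrow> Y; p ranges over [1,\<infinity>] (as ennreal).\<close>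

definition lp_space :: "ennreal \<Rightarrow> ('g \<Rightarrow> 'y::real_normed_vector) set" where
  "lp_space p = (if p = \<infinity> then {x. bounded (range (\<lambda>g. norm (x g)))}
                 else {x. (\<lambda>g. norm (x g) powr enn2real p) summable_on UNIV})"

definition lp_norm :: "ennreal \<Rightarrow> ('g \<Rightarrow> 'y::real_normed_vector) \<Rightarrow> real" where
  "lp_norm p x = (if p = \<infinity> then (SUP g. norm (x g))
                  else (infsum (\<lambda>g. norm (x g) powr enn2real p) UNIV) powr (1 / enn2real p))"

text \<open>Operators are represented by functions on 'g \<Rightarrow> 'y; the canonical representative
of an operator on X maps every element outside X to 0, so that HOL equality of
operators is equality as operators on X.\<close>

definition bounded_op :: "ennreal \<Rightarrow> (('g \<Rightarrow> 'y::complex_banach) \<Rightarrow> ('g \<Rightarrow> 'y)) \<Rightarrow> bool" where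
  "bounded_op p T \<longleftrightarrow>
     (\<forall>x\<in>lp_space p. T x \<in> lp_space p) \<and>
     (\<forall>x. x \<notin> lp_space p \<longrightarrow> T x = (\<lambda>_. 0)) \<and>
     (\<forall>x\<in>lp_space p. \<forall>y\<in>lp_space p. T (\<lambda>h. x h + y h) = (\<lambda>h. T x h + T y h)) \<and>
     (\<forall>x\<in>lp_space p. \<forall>c. T (\<lambda>h. scaleC c (x h)) = (\<lambda>h. scaleC c (T x h))) \<and>
     (\<exists>C. \<forall>x\<in>lp_space p. lp_norm p (T x) \<le> C * lp_norm p x)"

definition op_norm :: "ennreal \<Rightarrow> (('g \<Rightarrow> 'y::real_normed_vector) \<Rightarrow> ('g \<Rightarrow> 'y)) \<Rightarrow> real" where
  "op_norm p T = (SUP x\<in>{x\<in>lp_space p. lp_norm p x \<le> 1}. lp_norm p (T x))"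

definition op_diff :: "(('g \<Rightarrow> 'y::ab_group_add) \<Rightarrow> ('g \<Rightarrow> 'y)) \<Rightarrow> (('g \<Rightarrow> 'y) \<Rightarrow> ('g \<Rightarrow> 'y)) \<Rightarrow> ('g \<Rightarrow> 'y) \<Rightarrow> ('g \<Rightarrow> 'y)" where
  "op_diff S T = (\<lambda>x h. S x h - T x h)"

text \<open>P_n: multiplication by the indicator of G_n; I - P_n: multiplication by the indicator
of the complement.\<close>

definition proj :: "'g set \<Rightarrow> ('g \<Rightarrow> 'y::zero) \<Rightarrow> ('g \<Rightarrow> 'y)" where
  "proj S x = (\<lambda>h. if h \<in> S then x h else 0)"

definition coproj :: "'g set \<Rightarrow> ('g \<Rightarrow> 'y::zero) \<Rightarrow> ('g \<Rightarrow> 'y)" where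
  "coproj S x = (\<lambda>h. if h \<in> S then 0 else x h)"

definition admissible_seq :: "(nat \<Rightarrow> 'g set) \<Rightarrow> bool" where
  "admissible_seq Gs \<longleftrightarrow>
     (\<forall>n. Gs n \<noteq> {} \<and> Gs n \<noteq> UNIV) \<and>
     (\<forall>m. \<exists>N. \<forall>n\<ge>N. Gs m \<subseteq> Gs n) \<and>
     (\<Union>n. Gs n) = UNIV"

definition P_compact :: "ennreal \<Rightarrow> (nat \<Rightarrow> 'g set) \<Rightarrow> (('g \<Rightarrow> 'y::complex_banach) \<Rightarrow> ('g \<Rightarrow> 'y)) \<Rightarrow> bool" where
  "P_compact p Gs K \<longleftrightarrow> bounded_op p K \<and>
     (\<lambda>n. op_norm p (K \<circ> coproj (Gs n))) \<longlonglongrightarrow> 0 \<and>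
     (\<lambda>n. op_norm p (coproj (Gs n) \<circ> K)) \<longlonglongrightarrow> 0"

definition LP :: "ennreal \<Rightarrow> (nat \<Rightarrow> 'g set) \<Rightarrow> (('g \<Rightarrow> 'y::complex_banach) \<Rightarrow> ('g \<Rightarrow> 'y)) set" where
  "LP p Gs = {A. bounded_op p A \<and>
     (\<forall>K. P_compact p Gs K \<longrightarrow> P_compact p Gs (A \<circ> K) \<and> P_compact p Gs (K \<circ> A))}"

definition P_lim :: "ennreal \<Rightarrow> (nat \<Rightarrow> 'g set) \<Rightarrow> (nat \<Rightarrow> (('g \<Rightarrow> 'y::complex_banach) \<Rightarrow> ('g \<Rightarrow> 'y)))
                      \<Rightarrow> (('g \<Rightarrow> 'y) \<Rightarrow> ('g \<Rightarrow> 'y)) \<Rightarrow> bool" where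
  "P_lim p Gs As A \<longleftrightarrow>
     (\<forall>K. P_compact p Gs K \<longrightarrow>
        (\<lambda>n. op_norm p (K \<circ> op_diff (As n) A) + op_norm p (op_diff (As n) A \<circ> K)) \<longlonglongrightarrow> 0)"

definition shift :: "'g::group_add \<Rightarrow> ('g \<Rightarrow> 'y) \<Rightarrow> ('g \<Rightarrow> 'y)" where
  "shift g x = (\<lambda>h. x (h + g))"

definition tends_to_infinity :: "(nat \<Rightarrow> 'g) \<Rightarrow> bool" where
  "tends_to_infinity gs \<longleftrightarrow> (\<forall>F. finite F \<longrightarrow> (\<exists>N. \<forall>n\<ge>N. gs n \<notin> F))"

definition op_spectrum :: "ennreal \<Rightarrow> (nat \<Rightarrow> 'g::group_add set) \<Rightarrow> (('g \<Rightarrow> 'y::complex_banach) \<Rightarrow> ('g \<Rightarrow> 'y))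
                           \<Rightarrow> (('g \<Rightarrow> 'y) \<Rightarrow> ('g \<Rightarrow> 'y)) set" where
  "op_spectrum p Gs B = {C. C \<in> LP p Gs \<and> (\<exists>gs. tends_to_infinity gs \<and>
       P_lim p Gs (\<lambda>n. shift (gs n) \<circ> B \<circ> shift (- gs n)) C)}"

definition self_similar :: "ennreal \<Rightarrow> (nat \<Rightarrow> 'g::group_add set) \<Rightarrow> (('g \<Rightarrow> 'y::complex_banach) \<Rightarrow> ('g \<Rightarrow> 'y)) \<Rightarrow> bool" where
  "self_similar p Gs B \<longleftrightarrow> B \<in> op_spectrum p Gs B"

text \<open>\<Omega> is the (compact metric) space of type 'w; \<alpha> g is a homeomorphism of \<Omega>.\<close>

definition dynamical_system :: "('g::group_add \<Rightarrow> 'w::metric_space \<Rightarrow> 'w) \<Rightarrow> bool" where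
  "dynamical_system \<alpha> \<longleftrightarrow> compact (UNIV :: 'w set) \<and>
     (\<forall>g. \<exists>\<beta>. homeomorphism UNIV UNIV (\<alpha> g) \<beta>) \<and>
     (\<forall>g h. \<alpha> (g + h) = \<alpha> g \<circ> \<alpha> h)"

definition limit_set :: "('g \<Rightarrow> 'w::metric_space \<Rightarrow> 'w) \<Rightarrow> 'w \<Rightarrow> 'w set" where
  "limit_set \<alpha> \<omega> = {\<nu>. \<exists>gs. tends_to_infinity gs \<and> (\<lambda>n. \<alpha> (gs n) \<omega>) \<longlonglongrightarrow> \<nu>}"

definition pseudoergodic :: "('g \<Rightarrow> 'w::metric_space \<Rightarrow> 'w) \<Rightarrow> 'w \<Rightarrow> bool" where
  "pseudoergodic \<alpha> \<omega> \<longleftrightarrow> limit_set \<alpha> \<omega> = UNIV"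

definition operator_family ::
  "ennreal \<Rightarrow> (nat \<Rightarrow> 'g::group_add set) \<Rightarrow> ('g \<Rightarrow> 'w::metric_space \<Rightarrow> 'w)
     \<Rightarrow> ('w \<Rightarrow> (('g \<Rightarrow> 'y::complex_banach) \<Rightarrow> ('g \<Rightarrow> 'y))) \<Rightarrow> bool" where
  "operator_family p Gs \<alpha> A \<longleftrightarrow>
     (\<forall>\<omega>. A \<omega> \<in> LP p Gs) \<and>
     (\<forall>\<omega> g. A (\<alpha> g \<omega>) = shift g \<circ> A \<omega> \<circ> shift (- g)) \<and>
     (\<forall>\<omega>s \<omega>. \<omega>s \<longlonglongrightarrow> \<omega> \<longrightarrow> P_lim p Gs (\<lambda>n. A (\<omega>s n)) (A \<omega>))"

end

theory Submission
  imports Defs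
begin

text \<open>By covariance of the family, the limit operators of \<open>A(\<omega>)\<close> are the \<open>\<P>\<close>-strong limits of
  \<open>A(\<alpha>(g\<^sub>n)\<omega>)\<close> with \<open>g\<^sub>n \<rightarrow> \<infinity>\<close>. By compactness of \<open>\<Omega>\<close> a subsequence of \<open>\<alpha>(g\<^sub>n)\<omega>\<close>
  converges to some \<open>\<nu>\<close>, and continuity of \<open>A\<close> makes \<open>A(\<nu>)\<close> a \<open>\<P>\<close>-strong limit of the same
  subsequence. \<open>\<P>\<close>-strong limits are unique, because the rank-one projections onto single
  coordinates are \<open>\<P>\<close>-compact and see every entry of an operator; hence every limit operator
  lies in \<open>A(\<Omega>)\<close>. Conversely, pseudoergodicity of \<open>\<omega>\<close> provides for every \<open>\<nu>\<close> a sequence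
  \<open>g\<^sub>n \<rightarrow> \<infinity>\<close> with \<open>\<alpha>(g\<^sub>n)\<omega> \<rightarrow> \<nu>\<close>, so \<open>A(\<nu>)\<close> is a limit operator.\<close>

lemma lp_exponent_ge_1: "1 \<le> (p::ennreal) \<Longrightarrow> p \<noteq> \<infinity> \<Longrightarrow> 1 \<le> enn2real p"
  using enn2real_mono[of 1 p] by (simp add: top.not_eq_extremum)

lemma powr_le_two_powr_add:
  fixes a b c q :: real
  assumes "0 \<le> a" "0 \<le> b" "0 < q" "0 \<le> c" "c \<le> a + b"
  shows "c powr q \<le> 2 powr q * (a powr q + b powr q)"
proof -
  have "c powr q \<le> (2 * max a b) powr q"
    using assms by (intro powr_mono2) auto
  also have "\<dots> = 2 powr q * max a b powr q"
    using assms by (simp add: powr_mult)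
  also have "max a b powr q \<le> a powr q + b powr q"
    by (cases "a \<le> b") (auto simp: max_def)
  finally show ?thesis by simp
qed

lemma lp_space_add:
  fixes x y :: "'g \<Rightarrow> 'y::real_normed_vector"
  assumes p: "1 \<le> p" and x: "x \<in> lp_space p" and y: "y \<in> lp_space p"
  shows "(\<lambda>h. x h + y h) \<in> lp_space p"
proof (cases "p = \<infinity>")
  case True
  then obtain a b where "\<forall>g. norm (x g) \<le> a" "\<forall>g. norm (y g) \<le> b"
    using x y by (auto simp: lp_space_def bounded_iff)
  hence "\<forall>g. norm (norm (x g + y g)) \<le> a + b"
    by (smt (verit) norm_triangle_ineq real_norm_def norm_ge_zero)
  thus ?thesis using True by (auto simp: lp_space_def bounded_iff)
next
  case False
  define q where "q = enn2real p"
  have q: "0 < q" using lp_exponent_ge_1[OF p False] q_def by simp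
  have "(\<lambda>g. 2 powr q * (norm (x g) powr q + norm (y g) powr q)) summable_on UNIV"
    using x y False by (auto simp: lp_space_def q_def intro!: summable_on_cmult_right summable_on_add)
  hence "(\<lambda>g. norm (x g + y g) powr q) summable_on UNIV"
    by (rule summable_on_comparison_test) (auto intro!: powr_le_two_powr_add q norm_triangle_ineq)
  thus ?thesis using False by (auto simp: lp_space_def q_def)
qed

lemma lp_space_scaleC:
  fixes x :: "'g \<Rightarrow> 'y::complex_banach"
  assumes x: "x \<in> lp_space p"
  shows "(\<lambda>h. scaleC c (x h)) \<in> lp_space p"
proof (cases "p = \<infinity>")
  case True
  then obtain a where "\<forall>g. norm (x g) \<le> a"
    using x by (auto simp: lp_space_def bounded_iff)
  hence "\<forall>g. norm (norm (scaleC c (x g))) \<le> cmod c * a"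
    by (simp add: norm_scaleC mult_left_mono)
  thus ?thesis using True by (auto simp: lp_space_def bounded_iff)
next
  case False
  define q where "q = enn2real p"
  have "(\<lambda>g. cmod c powr q * norm (x g) powr q) summable_on UNIV"
    using x False by (auto simp: lp_space_def q_def intro!: summable_on_cmult_right)
  hence "(\<lambda>g. norm (scaleC c (x g)) powr q) summable_on UNIV"
    by (simp add: norm_scaleC powr_mult)
  thus ?thesis using False by (auto simp: lp_space_def q_def)
qed

lemma scaleC_zero: "scaleC c (0::'y::complex_banach) = 0"
proof -
  have "scaleC c (0::'y) = scaleC c 0 + scaleC c 0" by (metis add_0 scaleC_add_right)
  thus ?thesis by simp
qed

lemma scaleC_minus_one: "scaleC (-1) (v::'y::complex_banach) = - v"
  by (metis of_real_1 of_real_minus scaleC_of_real scaleR_minus1_left)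

lemma lp_space_diff:
  fixes x y :: "'g \<Rightarrow> 'y::complex_banach"
  assumes p: "1 \<le> p" and x: "x \<in> lp_space p" and y: "y \<in> lp_space p"
  shows "(\<lambda>h. x h - y h) \<in> lp_space p"
  using lp_space_add[OF p x lp_space_scaleC[OF y, of "-1"]] by (simp add: scaleC_minus_one)

lemma lp_delta:
  fixes v :: "'y::real_normed_vector"
  assumes p: "1 \<le> p"
  shows "(\<lambda>g. if g = h then v else 0) \<in> lp_space p"
    and "lp_norm p (\<lambda>g. if g = h then v else 0) = norm v"
proof -
  have "(\<lambda>g. if g = h then v else 0) \<in> lp_space p \<and> lp_norm p (\<lambda>g. if g = h then v else 0) = norm v"
  proof (cases "p = \<infinity>")
    case True
    have "bounded (range (\<lambda>g. norm (if g = h then v else 0)))"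
      by (rule boundedI[where B="norm v"]) auto
    moreover have "(SUP g. norm (if g = h then v else 0)) = norm v"
      by (rule cSup_eq_maximum) (auto split: if_splits)
    ultimately show ?thesis using True by (simp add: lp_space_def lp_norm_def)
  next
    case False
    define q where "q = enn2real p"
    have q: "0 < q" using lp_exponent_ge_1[OF p False] q_def by simp
    have pow: "(\<lambda>g. norm (if g = h then v else 0) powr q) = (\<lambda>g. if g = h then norm v powr q else 0)"
      by auto
    have "(\<lambda>g. if g = h then norm v powr q else 0) summable_on UNIV"
      by (rule summable_on_cong_neutral[where T="{h}", THEN iffD2]) auto
    moreover have "infsum (\<lambda>g. if g = h then norm v powr q else 0) UNIV = norm v powr q"
      by (subst infsum_cong_neutral[where T="{h}"]) auto
    moreover have "(norm v powr q) powr (1/q) = norm v" using q by (simp add: powr_powr)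
    ultimately show ?thesis using False by (simp add: lp_space_def lp_norm_def pow flip: q_def)
  qed
  thus "(\<lambda>g. if g = h then v else 0) \<in> lp_space p"
    and "lp_norm p (\<lambda>g. if g = h then v else 0) = norm v" by auto
qed

lemma lp_zero:
  assumes "1 \<le> p"
  shows "(\<lambda>_::'g. 0::'y::real_normed_vector) \<in> lp_space p" and "lp_norm p (\<lambda>_::'g. 0::'y) = 0"
  using lp_delta[OF assms, where v="0::'y" and h=undefined] by simp_all

lemma norm_le_lp_norm:
  fixes y :: "'g \<Rightarrow> 'y::real_normed_vector"
  assumes p: "1 \<le> p" and y: "y \<in> lp_space p"
  shows "norm (y h) \<le> lp_norm p y"
proof (cases "p = \<infinity>")
  case True
  have "bdd_above (range (\<lambda>g. norm (y g)))"
    using y True by (auto simp: lp_space_def intro: bounded_imp_bdd_above)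
  thus ?thesis using True by (simp add: lp_norm_def) (rule cSUP_upper, auto)
next
  case False
  define q where "q = enn2real p"
  have q: "0 < q" using lp_exponent_ge_1[OF p False] q_def by simp
  have "(\<lambda>g. norm (y g) powr q) summable_on UNIV"
    using y False by (auto simp: lp_space_def q_def)
  hence "infsum (\<lambda>g. norm (y g) powr q) {h} \<le> infsum (\<lambda>g. norm (y g) powr q) UNIV"
    by (intro infsum_mono2) auto
  hence "(norm (y h) powr q) powr (1/q) \<le> (infsum (\<lambda>g. norm (y g) powr q) UNIV) powr (1/q)"
    using q by (intro powr_mono2) auto
  also have "(norm (y h) powr q) powr (1/q) = norm (y h)" using q by (simp add: powr_powr)
  finally show ?thesis using False by (simp add: lp_norm_def flip: q_def)
qed

lemma lp_norm_nonneg: "1 \<le> p \<Longrightarrow> y \<in> lp_space p \<Longrightarrow> 0 \<le> lp_norm p (y::'g \<Rightarrow> 'y::real_normed_vector)"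
  by (rule order_trans[OF norm_ge_zero norm_le_lp_norm])

lemma lp_norm_scaleC_le:
  fixes x :: "'g \<Rightarrow> 'y::complex_banach"
  assumes p: "1 \<le> p" and x: "x \<in> lp_space p"
  shows "lp_norm p (\<lambda>h. scaleC c (x h)) \<le> cmod c * lp_norm p x"
proof (cases "p = \<infinity>")
  case True
  have "bdd_above (range (\<lambda>g. norm (x g)))"
    using x True by (auto simp: lp_space_def intro: bounded_imp_bdd_above)
  hence "(SUP g. norm (scaleC c (x g))) \<le> cmod c * (SUP g. norm (x g))"
    by (intro cSUP_least) (auto simp: norm_scaleC intro!: mult_left_mono cSUP_upper)
  thus ?thesis using True by (simp add: lp_norm_def)
next
  case False
  define q where "q = enn2real p"
  have q: "0 < q" using lp_exponent_ge_1[OF p False] q_def by simp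
  have "infsum (\<lambda>g. norm (scaleC c (x g)) powr q) UNIV = cmod c powr q * infsum (\<lambda>g. norm (x g) powr q) UNIV"
    by (simp add: norm_scaleC powr_mult infsum_cmult_right')
  moreover have "0 \<le> infsum (\<lambda>g. norm (x g) powr q) UNIV" by (rule infsum_nonneg) auto
  ultimately have "(infsum (\<lambda>g. norm (scaleC c (x g)) powr q) UNIV) powr (1/q)
      = cmod c * (infsum (\<lambda>g. norm (x g) powr q) UNIV) powr (1/q)"
    using q by (simp add: powr_mult powr_powr)
  thus ?thesis using False by (simp add: lp_norm_def flip: q_def)
qed

text \<open>A crude constant suffices below and avoids Minkowski's inequality.\<close>

lemma lp_norm_diff_le:
  fixes u v :: "'g \<Rightarrow> 'y::complex_banach"
  assumes p: "1 \<le> p" and u: "u \<in> lp_space p" and v: "v \<in> lp_space p"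
    and Mu: "lp_norm p u \<le> M" and Mv: "lp_norm p v \<le> M"
  shows "lp_norm p (\<lambda>h. u h - v h) \<le> 4 * M"
proof -
  have M: "0 \<le> M" using lp_norm_nonneg[OF p u] Mu by linarith
  show ?thesis
  proof (cases "p = \<infinity>")
    case True
    have "(SUP g. norm (u g - v g)) \<le> M + M"
    proof (rule cSUP_least)
      fix g
      have "norm (u g - v g) \<le> norm (u g) + norm (v g)" by (rule norm_triangle_ineq4)
      also have "\<dots> \<le> M + M"
        using norm_le_lp_norm[OF p u, of g] norm_le_lp_norm[OF p v, of g] Mu Mv by linarith
      finally show "norm (u g - v g) \<le> M + M" .
    qed simp
    thus ?thesis using True M by (simp add: lp_norm_def)
  next
    case False
    define q where "q = enn2real p"
    have q: "1 \<le> q" using lp_exponent_ge_1[OF p False] q_def by simp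
    define S where "S w = infsum (\<lambda>g. norm (w g) powr q) UNIV" for w :: "'g \<Rightarrow> 'y"
    have summable: "(\<lambda>g. norm (w g) powr q) summable_on UNIV" if "w \<in> lp_space p" for w
      using that False by (auto simp: lp_space_def q_def)
    have lp_norm_eq: "lp_norm p w = S w powr (1/q)" for w
      using False by (simp add: lp_norm_def S_def q_def)
    have S_le: "S w \<le> M powr q" if "w \<in> lp_space p" "lp_norm p w \<le> M" for w
    proof -
      have "0 \<le> S w" unfolding S_def by (rule infsum_nonneg) auto
      moreover have "(S w powr (1/q)) powr q \<le> M powr q"
        using that q by (intro powr_mono2) (auto simp: lp_norm_eq)
      ultimately show ?thesis using q by (simp add: powr_powr)
    qed
    have "S (\<lambda>h. u h - v h) \<le> infsum (\<lambda>g. 2 powr q * (norm (u g) powr q + norm (v g) powr q)) UNIV"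
      unfolding S_def using summable[OF lp_space_diff[OF p u v]] summable[OF u] summable[OF v] q
      by (intro infsum_mono)
        (auto intro!: summable_on_cmult_right summable_on_add powr_le_two_powr_add norm_triangle_ineq4)
    also have "\<dots> = 2 powr q * (S u + S v)"
      using summable[OF u] summable[OF v] by (simp add: infsum_cmult_right' infsum_add S_def)
    also have "\<dots> \<le> 2 powr q * (2 * M powr q)"
      using S_le[OF u Mu] S_le[OF v Mv] by simp
    finally have "lp_norm p (\<lambda>h. u h - v h) \<le> (2 powr q * (2 * M powr q)) powr (1/q)"
      unfolding lp_norm_eq using q
      by (intro powr_mono2) (auto simp: S_def intro: infsum_nonneg)
    also have "\<dots> = 2 * 2 powr (1/q) * M"
      using q M by (simp add: powr_mult powr_powr)
    also have "2 powr (1/q) \<le> 2 powr 1"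
      using q by (intro powr_mono) auto
    finally show ?thesis using M by (simp add: mult_right_mono)
  qed
qed

definition unit_ball_bounded ::
  "ennreal \<Rightarrow> (('g \<Rightarrow> 'y::real_normed_vector) \<Rightarrow> ('g \<Rightarrow> 'y)) \<Rightarrow> real \<Rightarrow> bool" where
  "unit_ball_bounded p T M \<longleftrightarrow>
     (\<forall>x\<in>lp_space p. lp_norm p x \<le> 1 \<longrightarrow> T x \<in> lp_space p \<and> lp_norm p (T x) \<le> M)"

text \<open>A supremum of reals that is not bounded above is unspecified in HOL, so facts about
  \<open>op_norm p T\<close> need a bound of \<open>T\<close> on the unit ball.\<close>

lemma op_norm_upper:
  assumes "unit_ball_bounded p T M" and "x \<in> lp_space p" and "lp_norm p x \<le> 1"
  shows "lp_norm p (T x) \<le> op_norm p T"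
  unfolding op_norm_def
  using assms by (intro cSUP_upper bdd_aboveI[where M=M]) (auto simp: unit_ball_bounded_def)

lemma op_norm_nonneg:
  fixes T :: "('g \<Rightarrow> 'y::real_normed_vector) \<Rightarrow> ('g \<Rightarrow> 'y)"
  assumes p: "1 \<le> p" and T: "unit_ball_bounded p T M"
  shows "0 \<le> op_norm p T"
proof -
  have "T (\<lambda>_. 0) \<in> lp_space p"
    using T lp_zero[OF p, where 'g='g and 'y='y] by (auto simp: unit_ball_bounded_def)
  hence "0 \<le> lp_norm p (T (\<lambda>_. 0))" by (rule lp_norm_nonneg[OF p])
  also have "\<dots> \<le> op_norm p T"
    using op_norm_upper[OF T] lp_zero[OF p, where 'g='g and 'y='y] by simp
  finally show ?thesis .
qed

lemma unit_ball_bounded_comp_contraction: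
  fixes T K :: "('g \<Rightarrow> 'y::real_normed_vector) \<Rightarrow> ('g \<Rightarrow> 'y)"
  assumes T: "unit_ball_bounded p T M"
    and K: "\<forall>y\<in>lp_space p. K y \<in> lp_space p \<and> lp_norm p (K y) \<le> lp_norm p y"
  shows "unit_ball_bounded p (K \<circ> T) M" and "unit_ball_bounded p (T \<circ> K) M"
proof -
  show "unit_ball_bounded p (K \<circ> T) M"
    unfolding unit_ball_bounded_def
  proof (intro ballI impI)
    fix x :: "'g \<Rightarrow> 'y" assume "x \<in> lp_space p" "lp_norm p x \<le> 1"
    hence "T x \<in> lp_space p" "lp_norm p (T x) \<le> M" using T by (auto simp: unit_ball_bounded_def)
    thus "(K \<circ> T) x \<in> lp_space p \<and> lp_norm p ((K \<circ> T) x) \<le> M" using K by force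
  qed
  show "unit_ball_bounded p (T \<circ> K) M"
    unfolding unit_ball_bounded_def
  proof (intro ballI impI)
    fix x :: "'g \<Rightarrow> 'y" assume "x \<in> lp_space p" "lp_norm p x \<le> 1"
    hence "K x \<in> lp_space p" "lp_norm p (K x) \<le> 1" using K by force+
    thus "(T \<circ> K) x \<in> lp_space p \<and> lp_norm p ((T \<circ> K) x) \<le> M"
      using T by (simp add: unit_ball_bounded_def)
  qed
qed

lemma op_norm_eq_0:
  fixes T :: "('g \<Rightarrow> 'y::real_normed_vector) \<Rightarrow> ('g \<Rightarrow> 'y)"
  assumes p: "1 \<le> p" and T: "\<forall>x\<in>lp_space p. T x = (\<lambda>_. 0)"
  shows "op_norm p T = 0"
proof -
  have "(\<lambda>x. lp_norm p (T x)) ` {x\<in>lp_space p. lp_norm p x \<le> 1} = {0}"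
    using T lp_zero[OF p, where 'g='g and 'y='y] by force
  thus ?thesis by (simp add: op_norm_def)
qed

lemma bounded_op_unit_ball_bounded:
  fixes B :: "('g \<Rightarrow> 'y::complex_banach) \<Rightarrow> ('g \<Rightarrow> 'y)"
  assumes p: "1 \<le> p" and B: "bounded_op p B"
  shows "\<exists>M. unit_ball_bounded p B M"
proof -
  obtain C where C: "\<forall>x\<in>lp_space p. lp_norm p (B x) \<le> C * lp_norm p x"
    using B by (auto simp: bounded_op_def)
  have "lp_norm p (B x) \<le> \<bar>C\<bar>" if x: "x \<in> lp_space p" and "lp_norm p x \<le> 1" for x
  proof -
    have "C * lp_norm p x \<le> \<bar>C\<bar> * 1"
      using that lp_norm_nonneg[OF p x] by (intro mult_mono) auto
    thus ?thesis using C x by force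
  qed
  thus ?thesis using B by (auto simp: unit_ball_bounded_def bounded_op_def)
qed

lemma op_diff_unit_ball_bounded:
  fixes B C :: "('g \<Rightarrow> 'y::complex_banach) \<Rightarrow> ('g \<Rightarrow> 'y)"
  assumes p: "1 \<le> p" and B: "bounded_op p B" and C: "bounded_op p C"
  shows "\<exists>M. unit_ball_bounded p (op_diff B C) M"
proof -
  obtain M1 M2 where M1: "unit_ball_bounded p B M1" and M2: "unit_ball_bounded p C M2"
    using bounded_op_unit_ball_bounded[OF p B] bounded_op_unit_ball_bounded[OF p C] by blast
  have "unit_ball_bounded p (op_diff B C) (4 * max M1 M2)"
    unfolding unit_ball_bounded_def op_diff_def
  proof (intro ballI impI conjI)
    fix x :: "'g \<Rightarrow> 'y" assume "x \<in> lp_space p" "lp_norm p x \<le> 1"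
    hence Bx: "B x \<in> lp_space p" "lp_norm p (B x) \<le> max M1 M2"
      and Cx: "C x \<in> lp_space p" "lp_norm p (C x) \<le> max M1 M2"
      using M1 M2 by (auto simp: unit_ball_bounded_def)
    show "(\<lambda>h. B x h - C x h) \<in> lp_space p" by (rule lp_space_diff[OF p Bx(1) Cx(1)])
    show "lp_norm p (\<lambda>h. B x h - C x h) \<le> 4 * max M1 M2"
      by (rule lp_norm_diff_le[OF p Bx(1) Cx(1) Bx(2) Cx(2)])
  qed
  thus ?thesis ..
qed

section \<open>Pointwise consequences of \<open>\<P>\<close>-strong convergence\<close>

text \<open>The rank-one projection \<open>x \<mapsto> x(h) \<delta>\<^sub>h\<close>; it is \<open>\<P>\<close>-compact because the
  \<open>\<G>\<^sub>n\<close> exhaust \<open>\<G>\<close>, and it detects the value of an operator at \<open>h\<close>.\<close>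

definition point_proj :: "ennreal \<Rightarrow> 'g \<Rightarrow> ('g \<Rightarrow> 'y::real_normed_vector) \<Rightarrow> ('g \<Rightarrow> 'y)" where
  "point_proj p h x = (if x \<in> lp_space p then (\<lambda>g. if g = h then x h else 0) else (\<lambda>_. 0))"

lemma point_proj_in_lp_space: "1 \<le> p \<Longrightarrow> point_proj p h x \<in> lp_space p"
  using lp_delta(1)[of p h "x h"] lp_zero(1)[of p] by (auto simp: point_proj_def)

lemma lp_norm_point_proj: "1 \<le> p \<Longrightarrow> x \<in> lp_space p \<Longrightarrow> lp_norm p (point_proj p h x) = norm (x h)"
  using lp_delta(2)[of p h "x h"] by (auto simp: point_proj_def)

lemma lp_norm_point_proj_le: "1 \<le> p \<Longrightarrow> x \<in> lp_space p \<Longrightarrow> lp_norm p (point_proj p h x) \<le> lp_norm p x"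
  by (simp add: lp_norm_point_proj norm_le_lp_norm)

lemma bounded_op_point_proj:
  assumes p: "1 \<le> p"
  shows "bounded_op p (point_proj p h :: ('g \<Rightarrow> 'y::complex_banach) \<Rightarrow> _)"
  unfolding bounded_op_def
proof (intro conjI ballI allI impI)
  fix x :: "'g \<Rightarrow> 'y"
  show "point_proj p h x \<in> lp_space p" by (rule point_proj_in_lp_space[OF p])
  show "x \<notin> lp_space p \<Longrightarrow> point_proj p h x = (\<lambda>_. 0)" by (simp add: point_proj_def)
next
  fix x y :: "'g \<Rightarrow> 'y" assume x: "x \<in> lp_space p" and y: "y \<in> lp_space p"
  thus "point_proj p h (\<lambda>g. x g + y g) = (\<lambda>g. point_proj p h x g + point_proj p h y g)"
    using lp_space_add[OF p x y] by (auto simp: point_proj_def)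
next
  fix x :: "'g \<Rightarrow> 'y" and c assume x: "x \<in> lp_space p"
  thus "point_proj p h (\<lambda>g. scaleC c (x g)) = (\<lambda>g. scaleC c (point_proj p h x g))"
    using lp_space_scaleC[OF x] by (auto simp: point_proj_def scaleC_zero)
next
  show "\<exists>C. \<forall>x\<in>lp_space p. lp_norm p (point_proj p h x) \<le> C * lp_norm p (x :: 'g \<Rightarrow> 'y)"
    by (rule exI[of _ 1]) (simp add: lp_norm_point_proj_le[OF p])
qed

lemma admissible_seq_eventually_mem:
  assumes "admissible_seq Gs"
  shows "\<exists>N. \<forall>n\<ge>N. h \<in> Gs n"
proof -
  have "h \<in> (\<Union>n. Gs n)" using assms by (simp add: admissible_seq_def)
  then obtain m where "h \<in> Gs m" by blast
  moreover obtain N where "\<forall>n\<ge>N. Gs m \<subseteq> Gs n" using assms unfolding admissible_seq_def by blast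
  ultimately show ?thesis by blast
qed

lemma P_compact_point_proj:
  assumes p: "1 \<le> p" and G: "admissible_seq Gs"
  shows "P_compact p Gs (point_proj p h :: ('g \<Rightarrow> 'y::complex_banach) \<Rightarrow> _)"
proof -
  define K where "K = (point_proj p h :: ('g \<Rightarrow> 'y) \<Rightarrow> _)"
  obtain N where N: "\<forall>n\<ge>N. h \<in> Gs n" using admissible_seq_eventually_mem[OF G] by blast
  have "op_norm p (K \<circ> coproj (Gs n)) = 0" "op_norm p (coproj (Gs n) \<circ> K) = 0" if "n \<ge> N" for n
    using N that by (auto intro!: op_norm_eq_0[OF p] simp: K_def point_proj_def coproj_def fun_eq_iff)
  hence "(\<lambda>n. op_norm p (K \<circ> coproj (Gs n))) \<longlonglongrightarrow> 0"
    and "(\<lambda>n. op_norm p (coproj (Gs n) \<circ> K)) \<longlonglongrightarrow> 0"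
    by (auto intro!: tendsto_eventually eventually_sequentiallyI[of N])
  thus ?thesis using bounded_op_point_proj[OF p] by (simp add: P_compact_def K_def)
qed

lemma P_lim_pointwise:
  fixes Bs :: "nat \<Rightarrow> ('g \<Rightarrow> 'y::complex_banach) \<Rightarrow> ('g \<Rightarrow> 'y)"
  assumes p: "1 \<le> p" and G: "admissible_seq Gs"
    and Bs: "\<And>n. bounded_op p (Bs n)" and C: "bounded_op p C" and L: "P_lim p Gs Bs C"
    and x: "x \<in> lp_space p" and x1: "lp_norm p x \<le> 1"
  shows "(\<lambda>n. Bs n x h) \<longlonglongrightarrow> C x h"
proof -
  define K where "K = (point_proj p h :: ('g \<Rightarrow> 'y) \<Rightarrow> _)"
  define s where "s n = op_norm p (K \<circ> op_diff (Bs n) C) + op_norm p (op_diff (Bs n) C \<circ> K)" for n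
  have s: "s \<longlonglongrightarrow> 0"
    using L P_compact_point_proj[OF p G] unfolding P_lim_def s_def K_def by blast
  have bound: "\<forall>n. norm (Bs n x h - C x h) \<le> s n"
  proof
    fix n
    obtain M where M: "unit_ball_bounded p (op_diff (Bs n) C) M"
      using op_diff_unit_ball_bounded[OF p Bs C] by blast
    have K: "\<forall>y\<in>lp_space p. K y \<in> lp_space p \<and> lp_norm p (K y) \<le> lp_norm p y"
      by (simp add: K_def point_proj_in_lp_space[OF p] lp_norm_point_proj_le[OF p])
    note KD = unit_ball_bounded_comp_contraction(1)[OF M K]
      and DK = unit_ball_bounded_comp_contraction(2)[OF M K]
    have "op_diff (Bs n) C x \<in> lp_space p"
      using M x x1 by (simp add: unit_ball_bounded_def)
    hence "norm (Bs n x h - C x h) = lp_norm p ((K \<circ> op_diff (Bs n) C) x)"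
      by (simp add: K_def lp_norm_point_proj[OF p] op_diff_def)
    also have "\<dots> \<le> op_norm p (K \<circ> op_diff (Bs n) C)"
      by (rule op_norm_upper[OF KD x x1])
    also have "\<dots> \<le> s n"
      using op_norm_nonneg[OF p DK] by (simp add: s_def)
    finally show "norm (Bs n x h - C x h) \<le> s n" .
  qed
  have "(\<lambda>n. Bs n x h - C x h) \<longlonglongrightarrow> 0"
    by (rule Lim_null_comparison[OF always_eventually[OF bound] s])
  thus ?thesis by (simp add: LIM_zero_iff)
qed

lemma bounded_op_eqI:
  fixes C D :: "('g \<Rightarrow> 'y::complex_banach) \<Rightarrow> ('g \<Rightarrow> 'y)"
  assumes p: "1 \<le> p" and C: "bounded_op p C" and D: "bounded_op p D"
    and eq: "\<And>x. x \<in> lp_space p \<Longrightarrow> lp_norm p x \<le> 1 \<Longrightarrow> C x = D x"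
  shows "C = D"
proof
  fix x :: "'g \<Rightarrow> 'y"
  show "C x = D x"
  proof (cases "x \<in> lp_space p")
    case False
    thus ?thesis using C D by (simp add: bounded_op_def)
  next
    case True
    have x0: "0 \<le> lp_norm p x" by (rule lp_norm_nonneg[OF p True])
    define r where "r = 1 / (lp_norm p x + 1)"
    define c where "c = complex_of_real r"
    have "0 < r" using x0 by (simp add: r_def)
    hence c0: "c \<noteq> 0" by (simp add: c_def)
    define y where "y = (\<lambda>h. scaleC c (x h))"
    have y: "y \<in> lp_space p" unfolding y_def by (rule lp_space_scaleC[OF True])
    have "lp_norm p y \<le> cmod c * lp_norm p x"
      unfolding y_def by (rule lp_norm_scaleC_le[OF p True])
    also have "\<dots> = r * lp_norm p x" using \<open>0 < r\<close> by (simp add: c_def)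
    also have "\<dots> \<le> 1" using x0 by (simp add: r_def field_simps)
    finally have "C y = D y" by (rule eq[OF y])
    hence "scaleC c (C x h) = scaleC c (D x h)" for h
      using C D True by (simp add: bounded_op_def y_def fun_eq_iff)
    hence "scaleC (inverse c) (scaleC c (C x h)) = scaleC (inverse c) (scaleC c (D x h))" for h
      by simp
    thus ?thesis using c0 by (simp add: scaleC_scaleC scaleC_one fun_eq_iff)
  qed
qed

lemma P_lim_unique:
  fixes Bs :: "nat \<Rightarrow> ('g \<Rightarrow> 'y::complex_banach) \<Rightarrow> ('g \<Rightarrow> 'y)"
  assumes p: "1 \<le> p" and G: "admissible_seq Gs" and Bs: "\<And>n. bounded_op p (Bs n)"
    and C: "bounded_op p C" and D: "bounded_op p D"
    and LC: "P_lim p Gs Bs C" and LD: "P_lim p Gs Bs D"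
  shows "C = D"
proof (rule bounded_op_eqI[OF p C D])
  fix x :: "'g \<Rightarrow> 'y" assume x: "x \<in> lp_space p" "lp_norm p x \<le> 1"
  show "C x = D x"
  proof
    fix h
    show "C x h = D x h"
      using P_lim_pointwise[OF p G Bs C LC x, of h] P_lim_pointwise[OF p G Bs D LD x, of h]
      by (rule LIMSEQ_unique)
  qed
qed

lemma P_lim_subseq:
  assumes "strict_mono r" and "P_lim p Gs Bs C"
  shows "P_lim p Gs (Bs \<circ> r) C"
  using assms LIMSEQ_subseq_LIMSEQ[OF _ assms(1)] unfolding P_lim_def o_def by blast

section \<open>Limit operators of a family over a dynamical system\<close>

lemma operator_family_shift_conj:
  "operator_family p Gs \<alpha> A \<Longrightarrow> shift g \<circ> A \<omega> \<circ> shift (- g) = A (\<alpha> g \<omega>)"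
  by (simp add: operator_family_def)

lemma op_spectrum_subset_range:
  fixes Gs :: "nat \<Rightarrow> 'g::group_add set"
    and \<alpha> :: "'g \<Rightarrow> 'w::metric_space \<Rightarrow> 'w"
    and A :: "'w \<Rightarrow> (('g \<Rightarrow> 'y::complex_banach) \<Rightarrow> ('g \<Rightarrow> 'y))"
  assumes p: "1 \<le> p" and G: "admissible_seq Gs" and \<Omega>: "compact (UNIV :: 'w set)"
    and A: "operator_family p Gs \<alpha> A"
  shows "op_spectrum p Gs (A \<omega>) \<subseteq> range A"
proof
  fix C assume "C \<in> op_spectrum p Gs (A \<omega>)"
  then obtain gs where C: "C \<in> LP p Gs" and L: "P_lim p Gs (\<lambda>n. A (\<alpha> (gs n) \<omega>)) C"
    by (auto simp: op_spectrum_def operator_family_shift_conj[OF A])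
  obtain r \<nu> where r: "strict_mono r" and conv: "((\<lambda>n. \<alpha> (gs n) \<omega>) \<circ> r) \<longlonglongrightarrow> \<nu>"
    using compact_imp_seq_compact[OF \<Omega>] by (meson UNIV_I seq_compactE)
  have bounded: "bounded_op p (A \<omega>')" for \<omega>'
    using A by (simp add: operator_family_def LP_def)
  have continuous: "P_lim p Gs (\<lambda>n. A (\<omega>s n)) (A \<omega>')" if "\<omega>s \<longlonglongrightarrow> \<omega>'" for \<omega>s \<omega>'
    using A that by (simp add: operator_family_def)
  have "P_lim p Gs ((\<lambda>n. A (\<alpha> (gs n) \<omega>)) \<circ> r) C"
    by (rule P_lim_subseq[OF r L])
  moreover have "P_lim p Gs ((\<lambda>n. A (\<alpha> (gs n) \<omega>)) \<circ> r) (A \<nu>)"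
    using continuous[OF conv] by (simp add: o_def)
  ultimately have "C = A \<nu>"
    using C bounded by (intro P_lim_unique[OF p G]) (auto simp: LP_def)
  thus "C \<in> range A" by simp
qed

lemma range_subset_op_spectrum:
  assumes A: "operator_family p Gs \<alpha> A" and \<omega>: "pseudoergodic \<alpha> \<omega>"
  shows "range A \<subseteq> op_spectrum p Gs (A \<omega>)"
proof
  fix C assume "C \<in> range A"
  then obtain \<nu> where C: "C = A \<nu>" by blast
  have "\<nu> \<in> limit_set \<alpha> \<omega>" using \<omega> by (simp add: pseudoergodic_def)
  then obtain gs where "tends_to_infinity gs" and "(\<lambda>n. \<alpha> (gs n) \<omega>) \<longlonglongrightarrow> \<nu>"
    by (auto simp: limit_set_def)
  thus "C \<in> op_spectrum p Gs (A \<omega>)"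
    using A unfolding op_spectrum_def operator_family_def C
    by (auto simp: operator_family_shift_conj[OF A])
qed

theorem corollary4p3:
  fixes p :: ennreal
    and Gs :: "nat \<Rightarrow> 'g::{group_add, countable} set"
    and \<alpha> :: "'g \<Rightarrow> 'w::metric_space \<Rightarrow> 'w"
    and A :: "'w \<Rightarrow> (('g \<Rightarrow> 'y::complex_banach) \<Rightarrow> ('g \<Rightarrow> 'y))"
  assumes "1 \<le> p"
    and "admissible_seq Gs"
    and "dynamical_system \<alpha>"
    and "operator_family p Gs \<alpha> A"
  shows "\<forall>\<omega>. pseudoergodic \<alpha> \<omega> \<longrightarrow>
           op_spectrum p Gs (A \<omega>) = range A \<and> self_similar p Gs (A \<omega>)"
proof (intro allI impI)
  fix \<omega> assume \<omega>: "pseudoergodic \<alpha> \<omega>"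
  have "compact (UNIV :: 'w set)"
    using assms(3) by (simp add: dynamical_system_def)
  hence "op_spectrum p Gs (A \<omega>) = range A"
    using op_spectrum_subset_range[OF assms(1,2) _ assms(4)] range_subset_op_spectrum[OF assms(4) \<omega>]
    by blast
  thus "op_spectrum p Gs (A \<omega>) = range A \<and> self_similar p Gs (A \<omega>)"
    by (simp add: self_similar_def)
qed

end
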